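(* Let $a\in C[0,1]$ change sign in $(0,1)$, and let $\Omega_-:=a^{-1}((-\infty,0))\subset[0,1]$. For every $\lambda<\pi^2$, let $u_\lambda$ be a positive solution of $$-u''=\lambda u+a(x)u^2\ \text{ in }(0,1),\qquad u(0)=u(1)=0.$$ Then $$\lim_{\lambda\downarrow-\infty}u_\lambda(x)=0\quad\text{for all }x\in\Omega_-,$$ uniformly on compact subintervals of $\Omega_-$. *)

theory Defs
  imports "HOL-Analysis.Analysis"
begin

definition is_pos_solution :: "(real \<Rightarrow> real) \<Rightarrow> real \<Rightarrow> (real \<Rightarrow> real) \<Rightarrow> bool" where
  "is_pos_solution a lam u \<longleftrightarrow>
     continuous_on {0..1} u \<and> u 0 = 0 \<and> u 1 = 0 \<and>
     (\<forall>x\<in>{0<..<1}. u x > 0) \<and>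
     (\<exists>u' u''. \<forall>x\<in>{0<..<1}.
        (u has_real_derivative u' x) (at x) \<and>
        (u' has_real_derivative u'' x) (at x) \<and>
        - u'' x = lam * u x + a x * (u x)^2)"

definition Omega_minus :: "(real \<Rightarrow> real) \<Rightarrow> real set" where
  "Omega_minus a = {x \<in> {0..1}. a x < 0}"

end

theory Submission
  imports Defs "HOL-Real_Asymp.Real_Asymp"
begin

text \<open>Write \<open>\<mu> = -\<lambda>\<close>. Near a compact subinterval of \<open>\<Omega>\<^sub>-\<close> we have \<open>a \<le> -m < 0\<close>, so there
  \<open>u\<^sub>\<lambda>'' \<ge> \<mu> u\<^sub>\<lambda> + m u\<^sub>\<lambda>\<^sup>2\<close>. The explicit profile
  \<open>\<phi>(y) = 3\<mu> / (2m sinh\<^sup>2(\<surd>\<mu> y / 2))\<close> solves \<open>\<phi>'' = \<mu> \<phi> + m \<phi>\<^sup>2\<close> and blows up at \<open>y = 0\<close>, so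
  \<open>w(x) = \<phi>(x - x\<^sub>0 + r) + \<phi>(x - x\<^sub>0 - r)\<close> is a supersolution on \<open>(x\<^sub>0 - r, x\<^sub>0 + r)\<close> that dominates
  the bounded function \<open>u\<^sub>\<lambda>\<close> near the ends of that window. The maximum principle yields
  \<open>u\<^sub>\<lambda>(x\<^sub>0) \<le> w(x\<^sub>0) = 2\<phi>(r)\<close>, and \<open>2\<phi>(r) \<sim> 12 \<mu> exp(-r\<surd>\<mu>) / m \<rightarrow> 0\<close> as
  \<open>\<mu> \<rightarrow> \<infinity>\<close>, uniformly in \<open>x\<^sub>0\<close>.\<close>

lemma DERIV_shift_diff:
  "(f has_real_derivative D) (at (x - c)) \<Longrightarrow> ((\<lambda>x. f (x - c)) has_real_derivative D) (at x)"
  using DERIV_shift[of f D x "- c"] by simp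

lemma max_principle:
  fixes g g' g'' :: "real \<Rightarrow> real"
  assumes "p \<le> q" and g_cont: "continuous_on {p..q} g" and "g p \<le> 0" "g q \<le> 0"
    and g_deriv: "\<And>x. x \<in> {p<..<q} \<Longrightarrow>
      (g has_real_derivative g' x) (at x) \<and> (g' has_real_derivative g'' x) (at x)"
    and convex_where_pos: "\<And>x. x \<in> {p<..<q} \<Longrightarrow> g x > 0 \<Longrightarrow> g'' x > 0"
    and x: "x \<in> {p..q}"
  shows "g x \<le> 0"
proof (rule ccontr)
  assume "\<not> g x \<le> 0"
  obtain z where z: "z \<in> {p..q}" and z_max: "\<And>y. y \<in> {p..q} \<Longrightarrow> g y \<le> g z"
    using continuous_attains_sup[OF compact_Icc _ g_cont] \<open>p \<le> q\<close> by auto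
  have "g z > 0" using \<open>\<not> g x \<le> 0\<close> z_max[OF x] by linarith
  then have z_inner: "z \<in> {p<..<q}" using z \<open>g p \<le> 0\<close> \<open>g q \<le> 0\<close> by (cases "z = p"; cases "z = q") auto
  have d1: "(g has_real_derivative g' z) (at z)" and d2: "(g' has_real_derivative g'' z) (at z)"
    using g_deriv[OF z_inner] by auto
  have "g' z = 0"
  proof (rule DERIV_local_max[OF d1])
    show "0 < min (z - p) (q - z)" using z_inner by auto
    show "\<forall>y. \<bar>z - y\<bar> < min (z - p) (q - z) \<longrightarrow> g y \<le> g z"
      using z_max by (auto simp: abs_if split: if_splits)
  qed
  obtain d where "d > 0" and g'_inc: "\<And>h. h > 0 \<Longrightarrow> h < d \<Longrightarrow> g' z < g' (z + h)"
    using DERIV_pos_inc_right[OF d2 convex_where_pos[OF z_inner \<open>g z > 0\<close>]] by blast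
  define h where "h = min (d / 2) ((q - z) / 2)"
  have h: "0 < h" "h < d" "z + h < q" using \<open>d > 0\<close> z_inner by (auto simp: h_def min_def field_simps)
  obtain \<xi> where \<xi>: "z < \<xi>" "\<xi> < z + h" and mvt: "g (z + h) - g z = h * g' \<xi>"
    using MVT2[of z "z + h" g g'] h g_deriv z_inner by auto
  have "g' \<xi> > 0" using g'_inc[of "\<xi> - z"] \<xi> h \<open>g' z = 0\<close> by auto
  then have "g (z + h) > g z" using mvt mult_pos_pos[OF \<open>h > 0\<close> \<open>g' \<xi> > 0\<close>] by linarith
  moreover have "z + h \<in> {p..q}" using z_inner h by auto
  ultimately show False using z_max by force
qed

lemma pos_solution_nonneg:
  assumes "is_pos_solution a lam u" and "x \<in> {0..1}"
  shows "0 \<le> u x"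
proof -
  have "x = 0 \<or> x = 1 \<or> x \<in> {0<..<1}" using assms(2) by auto
  then show ?thesis using assms(1) unfolding is_pos_solution_def by (auto intro: less_imp_le)
qed

lemma pos_solution_le_supersolution:
  fixes a u w w' w'' :: "real \<Rightarrow> real"
  assumes sol: "is_pos_solution a lam u" and "lam < 0" and "m \<ge> 0"
    and "0 \<le> p" "p \<le> q" "q \<le> 1"
    and a_neg: "\<And>x. x \<in> {p<..<q} \<Longrightarrow> a x \<le> - m"
    and w_cont: "continuous_on {p..q} w"
    and w_nonneg: "\<And>x. x \<in> {p<..<q} \<Longrightarrow> 0 \<le> w x"
    and w_deriv: "\<And>x. x \<in> {p<..<q} \<Longrightarrow>
      (w has_real_derivative w' x) (at x) \<and> (w' has_real_derivative w'' x) (at x)"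
    and w_super: "\<And>x. x \<in> {p<..<q} \<Longrightarrow> w'' x \<le> - lam * w x + m * (w x)^2"
    and "u p \<le> w p" "u q \<le> w q"
    and x: "x \<in> {p..q}"
  shows "u x \<le> w x"
proof -
  from sol obtain u' u'' where u_cont: "continuous_on {0..1} u"
    and u_deriv: "\<And>x. x \<in> {0<..<1} \<Longrightarrow> (u has_real_derivative u' x) (at x) \<and>
        (u' has_real_derivative u'' x) (at x) \<and> - u'' x = lam * u x + a x * (u x)^2"
    unfolding is_pos_solution_def by metis
  have inner: "x \<in> {0<..<1}" if "x \<in> {p<..<q}" for x
    using that \<open>0 \<le> p\<close> \<open>q \<le> 1\<close> by auto
  have "u x - w x \<le> 0"
  proof (rule max_principle[where g = "\<lambda>x. u x - w x"
        and g' = "\<lambda>x. u' x - w' x" and g'' = "\<lambda>x. u'' x - w'' x"])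
    show "continuous_on {p..q} (\<lambda>x. u x - w x)"
      using continuous_on_subset[OF u_cont] w_cont \<open>0 \<le> p\<close> \<open>q \<le> 1\<close>
      by (intro continuous_intros) auto
  next
    fix x assume "x \<in> {p<..<q}"
    then show "((\<lambda>x. u x - w x) has_real_derivative u' x - w' x) (at x) \<and>
        ((\<lambda>x. u' x - w' x) has_real_derivative u'' x - w'' x) (at x)"
      using u_deriv[OF inner] w_deriv by (auto intro!: derivative_intros)
  next
    fix x assume x: "x \<in> {p<..<q}" and "u x - w x > 0"
    have "- lam * w x + m * (w x)^2 < - lam * u x + m * (u x)^2"
      using \<open>u x - w x > 0\<close> w_nonneg[OF x] \<open>lam < 0\<close> \<open>m \<ge> 0\<close>
      by (intro add_less_le_mono mult_strict_left_mono mult_left_mono power_mono) auto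
    also have "\<dots> \<le> - lam * u x - a x * (u x)^2"
      using mult_right_mono[OF a_neg[OF x], of "(u x)^2"] by simp
    also have "\<dots> = u'' x" using u_deriv[OF inner[OF x]] by simp
    finally show "u'' x - w'' x > 0" using w_super[OF x] by simp
  qed (use assms in auto)
  then show ?thesis by simp
qed

definition blowup_profile :: "real \<Rightarrow> real \<Rightarrow> real \<Rightarrow> real" where
  "blowup_profile \<mu> m y = 3 * \<mu> / (2 * m) / sinh (sqrt \<mu> / 2 * y)^2"

lemma blowup_profile_minus [simp]: "blowup_profile \<mu> m (- y) = blowup_profile \<mu> m y"
  by (simp add: blowup_profile_def)

lemma blowup_profile_pos:
  assumes "\<mu> > 0" "m > 0" "y \<noteq> 0"
  shows "blowup_profile \<mu> m y > 0"
  using assms by (simp add: blowup_profile_def)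

lemma blowup_profile_ode:
  assumes "\<mu> > 0" "m > 0"
  obtains \<phi>' where
    "\<And>y. y \<noteq> 0 \<Longrightarrow> (blowup_profile \<mu> m has_real_derivative \<phi>' y) (at y)"
    "\<And>y. y \<noteq> 0 \<Longrightarrow> (\<phi>' has_real_derivative
        \<mu> * blowup_profile \<mu> m y + m * (blowup_profile \<mu> m y)^2) (at y)"
proof
  define k where "k = sqrt \<mu> / 2"
  define \<alpha> where "\<alpha> = 3 * \<mu> / (2 * m)"
  have \<mu>: "\<mu> = 4 * k^2" using assms by (simp add: k_def power_divide)
  have \<alpha>: "\<alpha> = 6 * k^2 / m" by (simp add: \<alpha>_def \<mu>)
  have \<phi>: "blowup_profile \<mu> m = (\<lambda>y. \<alpha> / sinh (k * y)^2)"
    by (simp add: fun_eq_iff blowup_profile_def k_def \<alpha>_def)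
  fix y :: real assume "y \<noteq> 0"
  then have s: "sinh (k * y) \<noteq> 0" using assms by (simp add: k_def)
  show "(blowup_profile \<mu> m has_real_derivative -2 * \<alpha> * k * cosh (k * y) / sinh (k * y)^3) (at y)"
    unfolding \<phi> using s
    by (auto intro!: derivative_eq_intros simp: field_simps power2_eq_square power3_eq_cube)
  have "((\<lambda>y. -2 * \<alpha> * k * cosh (k * y) / sinh (k * y)^3) has_real_derivative
        2 * \<alpha> * k^2 * (3 * cosh (k * y)^2 - sinh (k * y)^2) / sinh (k * y)^4) (at y)"
    using s by (auto intro!: derivative_eq_intros simp: field_simps eval_nat_numeral)
  also have "2 * \<alpha> * k^2 * (3 * cosh (k * y)^2 - sinh (k * y)^2) / sinh (k * y)^4
      = \<mu> * blowup_profile \<mu> m y + m * (blowup_profile \<mu> m y)^2"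
    using s assms unfolding \<phi> cosh_square_eq by (simp add: \<alpha> \<mu> field_simps eval_nat_numeral)
  finally show "((\<lambda>y. -2 * \<alpha> * k * cosh (k * y) / sinh (k * y)^3) has_real_derivative
        \<mu> * blowup_profile \<mu> m y + m * (blowup_profile \<mu> m y)^2) (at y)" .
qed

lemma filterlim_blowup_profile_at_right_0:
  assumes "\<mu> > 0" "m > 0"
  shows "filterlim (blowup_profile \<mu> m) at_top (at_right 0)"
  using assms unfolding blowup_profile_def by real_asymp

lemma blowup_profile_exceeds_near_0:
  assumes "\<mu> > 0" "m > 0" "r > 0"
  obtains t where "0 < t" "t < r" "M < blowup_profile \<mu> m t"
proof -
  have "\<forall>\<^sub>F t in at_right 0. M < blowup_profile \<mu> m t"
    using filterlim_blowup_profile_at_right_0[OF assms(1,2)] unfolding filterlim_at_top_dense by blast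
  then have "\<forall>\<^sub>F t in at_right 0. M < blowup_profile \<mu> m t \<and> t \<in> {0<..<r}"
    using eventually_at_right_real[OF \<open>r > 0\<close>] by (rule eventually_conj)
  then show ?thesis
    using that eventually_happens'[OF trivial_limit_at_right_real] by auto
qed

lemma blowup_profile_tendsto_0_at_bot:
  assumes "m > 0" "r > 0"
  shows "((\<lambda>lam. blowup_profile (- lam) m r) \<longlongrightarrow> 0) at_bot"
  using assms unfolding blowup_profile_def by real_asymp

definition window_barrier :: "real \<Rightarrow> real \<Rightarrow> real \<Rightarrow> real \<Rightarrow> real \<Rightarrow> real" where
  "window_barrier \<mu> m L R x = blowup_profile \<mu> m (x - L) + blowup_profile \<mu> m (x - R)"

lemma window_barrier_pos:
  assumes "\<mu> > 0" "m > 0" "L < x" "x < R"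
  shows "window_barrier \<mu> m L R x > 0"
  using assms blowup_profile_pos[of \<mu> m] unfolding window_barrier_def by (simp add: add_pos_pos)

lemma window_barrier_supersolution:
  assumes "\<mu> > 0" "m > 0"
  obtains w' w'' where
    "\<And>x. L < x \<Longrightarrow> x < R \<Longrightarrow> (window_barrier \<mu> m L R has_real_derivative w' x) (at x) \<and>
      (w' has_real_derivative w'' x) (at x)"
    "\<And>x. L < x \<Longrightarrow> x < R \<Longrightarrow>
      w'' x \<le> \<mu> * window_barrier \<mu> m L R x + m * (window_barrier \<mu> m L R x)^2"
proof -
  define \<phi> where "\<phi> = blowup_profile \<mu> m"
  obtain \<phi>' where d\<phi>: "\<And>y. y \<noteq> 0 \<Longrightarrow> (\<phi> has_real_derivative \<phi>' y) (at y)"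
    and d\<phi>': "\<And>y. y \<noteq> 0 \<Longrightarrow> (\<phi>' has_real_derivative \<mu> * \<phi> y + m * (\<phi> y)^2) (at y)"
    using blowup_profile_ode[OF assms] unfolding \<phi>_def by metis
  define \<phi>'' where "\<phi>'' y = \<mu> * \<phi> y + m * (\<phi> y)^2" for y
  show ?thesis
  proof (rule that[where w' = "\<lambda>x. \<phi>' (x - L) + \<phi>' (x - R)"
        and w'' = "\<lambda>x. \<phi>'' (x - L) + \<phi>'' (x - R)"])
    fix x assume "L < x" "x < R"
    then show "(window_barrier \<mu> m L R has_real_derivative \<phi>' (x - L) + \<phi>' (x - R)) (at x) \<and>
        ((\<lambda>x. \<phi>' (x - L) + \<phi>' (x - R)) has_real_derivative \<phi>'' (x - L) + \<phi>'' (x - R)) (at x)"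
      unfolding window_barrier_def \<phi>_def[symmetric] \<phi>''_def
      by (intro conjI DERIV_add DERIV_shift_diff d\<phi> d\<phi>') auto
    have "0 \<le> m * \<phi> (x - L) * \<phi> (x - R)"
      using blowup_profile_pos[OF assms, of "x - L"] blowup_profile_pos[OF assms, of "x - R"]
        \<open>L < x\<close> \<open>x < R\<close> \<open>m > 0\<close>
      unfolding \<phi>_def by simp
    then show "\<phi>'' (x - L) + \<phi>'' (x - R)
        \<le> \<mu> * window_barrier \<mu> m L R x + m * (window_barrier \<mu> m L R x)^2"
      unfolding window_barrier_def \<phi>_def[symmetric] \<phi>''_def by (simp add: power2_sum algebra_simps)
  qed
qed

lemma pos_solution_le_blowup_profile:
  fixes a u :: "real \<Rightarrow> real"
  assumes sol: "is_pos_solution a lam u" and "lam < 0" and "m > 0" and "r > 0"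
    and x0: "x0 \<in> {0..1}" and a_neg: "\<And>x. x \<in> {0..1} \<Longrightarrow> \<bar>x - x0\<bar> < r \<Longrightarrow> a x \<le> - m"
  shows "u x0 \<le> 2 * blowup_profile (- lam) m r"
proof -
  have \<mu>: "- lam > 0" using \<open>lam < 0\<close> by simp
  define w where "w = window_barrier (- lam) m (x0 - r) (x0 + r)"
  obtain w' w'' where w_deriv: "\<And>x. x0 - r < x \<Longrightarrow> x < x0 + r \<Longrightarrow>
      (w has_real_derivative w' x) (at x) \<and> (w' has_real_derivative w'' x) (at x)"
    and w_super: "\<And>x. x0 - r < x \<Longrightarrow> x < x0 + r \<Longrightarrow> w'' x \<le> - lam * w x + m * (w x)^2"
    using window_barrier_supersolution[OF \<mu> \<open>m > 0\<close>] unfolding w_def by metis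
  have w_pos: "\<And>x. x0 - r < x \<Longrightarrow> x < x0 + r \<Longrightarrow> w x > 0"
    unfolding w_def using window_barrier_pos[OF \<mu> \<open>m > 0\<close>] .
  obtain M where M: "\<And>x. x \<in> {0..1} \<Longrightarrow> u x \<le> M"
    using continuous_attains_sup[OF compact_Icc _ conjunct1[OF sol[unfolded is_pos_solution_def]]]
    by force
  obtain t where t: "0 < t" "t < r" "M < blowup_profile (- lam) m t"
    using blowup_profile_exceeds_near_0[OF \<mu> \<open>m > 0\<close> \<open>r > 0\<close>] .
  \<comment> \<open>Each end of \<open>[p, q]\<close> is an end of \<open>[0, 1]\<close>, where \<open>u\<close> vanishes, or lies at distance \<open>t\<close>
    from an end of the window, where \<open>w\<close> exceeds \<open>M\<close>.\<close>
  define p where "p = max 0 (x0 - r + t)"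
  define q where "q = min 1 (x0 + r - t)"
  have pq: "0 \<le> p" "p \<le> x0" "x0 \<le> q" "q \<le> 1" using x0 t by (auto simp: p_def q_def)
  have in_window: "x0 - r < x" "x < x0 + r" if "x \<in> {p..q}" for x
    using that t by (auto simp: p_def q_def)
  have w_ge: "blowup_profile (- lam) m (x - (x0 - r)) \<le> w x"
    "blowup_profile (- lam) m (x - (x0 + r)) \<le> w x" if "x \<in> {p..q}" for x
    using blowup_profile_pos[OF \<mu> \<open>m > 0\<close>] in_window[OF that]
    by (simp_all add: w_def window_barrier_def less_imp_le)
  have u_ends: "u 0 = 0" "u 1 = 0" using sol by (simp_all add: is_pos_solution_def)
  have "p = 0 \<or> p - (x0 - r) = t" by (auto simp: p_def)
  then have "u p \<le> w p"
    using u_ends w_pos[of p] w_ge(1)[of p] M[of p] t in_window[of p] pq by force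
  have "q = 1 \<or> q - (x0 + r) = - t" by (auto simp: q_def)
  then have "u q \<le> w q"
    using u_ends w_pos[of q] w_ge(2)[of q] M[of q] t in_window[of q] pq by force
  have "u x0 \<le> w x0"
  proof (rule pos_solution_le_supersolution[OF sol \<open>lam < 0\<close>, where m = m and w' = w' and w'' = w''])
    show "continuous_on {p..q} w"
      using w_deriv in_window by (meson DERIV_isCont continuous_at_imp_continuous_on)
  next
    fix x assume "x \<in> {p<..<q}"
    then show "a x \<le> - m" using a_neg[of x] in_window[of x] pq by (auto simp: abs_less_iff)
  qed (use \<open>m > 0\<close> pq in_window w_pos w_deriv w_super \<open>u p \<le> w p\<close> \<open>u q \<le> w q\<close>
      in \<open>auto intro!: less_imp_le\<close>)
  also have "w x0 = 2 * blowup_profile (- lam) m r"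
    by (simp add: w_def window_barrier_def)
  finally show ?thesis .
qed

lemma Omega_minus_uniformly_negative:
  assumes cont: "continuous_on {0..1} a" and "c \<le> d" and cd: "{c..d} \<subseteq> Omega_minus a"
  obtains m r where "m > 0" "r > 0"
    "\<And>x0 x. x0 \<in> {c..d} \<Longrightarrow> x \<in> {0..1} \<Longrightarrow> \<bar>x - x0\<bar> < r \<Longrightarrow> a x \<le> - m"
proof -
  have cd01: "{c..d} \<subseteq> {0..1}" and a_neg: "\<And>y. y \<in> {c..d} \<Longrightarrow> a y < 0"
    using cd by (auto simp: Omega_minus_def)
  obtain y0 where y0: "y0 \<in> {c..d}" and y0_max: "\<And>y. y \<in> {c..d} \<Longrightarrow> a y \<le> a y0"
    using continuous_attains_sup[OF compact_Icc _ continuous_on_subset[OF cont cd01]] \<open>c \<le> d\<close>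
    by force
  define m where "m = - a y0 / 2"
  have "m > 0" using a_neg[OF y0] by (simp add: m_def)
  obtain r where "r > 0"
    and r: "\<And>x y. x \<in> {0..1} \<Longrightarrow> y \<in> {0..1} \<Longrightarrow> dist y x < r \<Longrightarrow> dist (a y) (a x) < m"
    using compact_uniformly_continuous[OF cont compact_Icc] \<open>m > 0\<close>
    unfolding uniformly_continuous_on_def by metis
  show ?thesis
  proof (rule that[OF \<open>m > 0\<close> \<open>r > 0\<close>])
    fix x0 x assume "x0 \<in> {c..d}" "x \<in> {0..1}" "\<bar>x - x0\<bar> < r"
    then have "dist (a x) (a x0) < m" using r[of x0 x] cd01 by (auto simp: dist_real_def)
    moreover have "a x0 \<le> a y0" using y0_max[OF \<open>x0 \<in> {c..d}\<close>] .
    ultimately show "a x \<le> - m" by (auto simp: dist_real_def m_def)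
  qed
qed

lemma uniform_limit_pos_solutions_at_bot:
  fixes a :: "real \<Rightarrow> real" and u :: "real \<Rightarrow> real \<Rightarrow> real"
  assumes cont: "continuous_on {0..1} a"
    and sol: "\<And>lam. lam < 0 \<Longrightarrow> is_pos_solution a lam (u lam)"
    and "c \<le> d" "{c..d} \<subseteq> Omega_minus a"
  shows "uniform_limit {c..d} u (\<lambda>x. 0) at_bot"
proof (rule uniform_limitI)
  obtain m r where "m > 0" "r > 0"
    and a_neg: "\<And>x0 x. x0 \<in> {c..d} \<Longrightarrow> x \<in> {0..1} \<Longrightarrow> \<bar>x - x0\<bar> < r \<Longrightarrow> a x \<le> - m"
    using Omega_minus_uniformly_negative[OF cont assms(3,4)] by metis
  have cd01: "{c..d} \<subseteq> {0..1}" using assms(4) by (auto simp: Omega_minus_def)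
  have bound: "dist (u lam x) 0 \<le> 2 * blowup_profile (- lam) m r" if "lam < 0" "x \<in> {c..d}" for lam x
  proof -
    have "x \<in> {0..1}" using that cd01 by auto
    have "u lam x \<le> 2 * blowup_profile (- lam) m r"
      using pos_solution_le_blowup_profile[OF sol[OF \<open>lam < 0\<close>] \<open>lam < 0\<close> \<open>m > 0\<close> \<open>r > 0\<close> \<open>x \<in> {0..1}\<close>]
        a_neg \<open>x \<in> {c..d}\<close> by blast
    moreover have "0 \<le> u lam x" using pos_solution_nonneg[OF sol[OF \<open>lam < 0\<close>] \<open>x \<in> {0..1}\<close>] .
    ultimately show ?thesis by (simp add: dist_real_def)
  qed
  fix e :: real assume "e > 0"
  have "((\<lambda>lam. 2 * blowup_profile (- lam) m r) \<longlongrightarrow> 0) at_bot"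
    using tendsto_mult_right_zero[OF blowup_profile_tendsto_0_at_bot[OF \<open>m > 0\<close> \<open>r > 0\<close>]] .
  then have "\<forall>\<^sub>F lam in at_bot. 2 * blowup_profile (- lam) m r < e \<and> lam < 0"
    using \<open>e > 0\<close> by (intro eventually_conj order_tendstoD(2) eventually_gt_at_bot)
  then show "\<forall>\<^sub>F lam in at_bot. \<forall>x\<in>{c..d}. dist (u lam x) 0 < e"
    by eventually_elim (use bound in fastforce)
qed

theorem theorem3p1:
  fixes a :: "real \<Rightarrow> real" and u :: "real \<Rightarrow> real \<Rightarrow> real"
  assumes cont: "continuous_on {0..1} a"
    and sign_change: "\<exists>x\<in>{0<..<1}. a x > 0" "\<exists>y\<in>{0<..<1}. a y < 0"
    and sol: "\<And>lam. lam < pi^2 \<Longrightarrow> is_pos_solution a lam (u lam)"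
  shows "(\<forall>x\<in>Omega_minus a. ((\<lambda>lam. u lam x) \<longlongrightarrow> 0) at_bot) \<and>
         (\<forall>c d. c \<le> d \<and> {c..d} \<subseteq> Omega_minus a \<longrightarrow>
            uniform_limit {c..d} u (\<lambda>x. 0) at_bot)"
proof -
  have sol_neg: "is_pos_solution a lam (u lam)" if "lam < 0" for lam
    using sol[OF less_trans[OF that zero_less_power[OF pi_gt_zero]]] .
  have unif: "uniform_limit {c..d} u (\<lambda>x. 0) at_bot" if "c \<le> d" "{c..d} \<subseteq> Omega_minus a" for c d
    using uniform_limit_pos_solutions_at_bot[OF cont sol_neg that] .
  moreover have "((\<lambda>lam. u lam x) \<longlongrightarrow> 0) at_bot" if "x \<in> Omega_minus a" for x
    using unif[of x x] that by simp
  ultimately show ?thesis by blast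
qed

end
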